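(* Assume the following symmetry condition: for each $\beta\in R$ there is a bijection $\tau_\beta:\Sigma\to\Sigma$ with $p(y\mid\alpha)=p(\tau_\beta(y)\mid\alpha-\beta)$ for all $y\in\Sigma$, $\alpha\in R$, and, when $\Sigma$ is $\mathbb R^l$ or $\mathbb C^l$, each $\tau_\beta$ is an isometry for the Euclidean distance. Then, under LP decoding, the probability of codeword error given that codeword $c$ is transmitted is the same for every $c\in\mathcal C$.
   Context: Let $R$ be a finite ring with $q$ elements, $R^-=R\setminus\{0\}$, $\mathcal H$ an $m\times n$ matrix over $R$, $\mathcal C=\{c\in R^n:c\mathcal H^T=0\}$, $\mathcal I=\{1,\dots,n\}$, $\mathcal J=\{1,\dots,m\}$, $\mathcal I_j=\{i:\mathcal H_{j,i}\ne0\}$, $\mathcal C_j=\{b\in R^{\mathcal I_j}:\sum_{i\in\mathcal I_j}b_i\mathcal H_{j,i}=0\}$. Let $\xi:R\to\{0,1\}^{q-1}$ (coordinates indexed by $R^-$), $\xi(a)^{(\gamma)}=1$ iff $\gamma=a$; $\Xi(c)=(\xi(c_1)\mid\cdots\mid\xi(c_n))$; coordinates of $f\in\mathbb R^{(q-1)n}$ are $f_i^{(\alpha)}$. $\mathcal Q$ is the set of $(f,w)$, $w=(w_{j,b})_{j\in\mathcal J,b\in\mathcal C_j}$, with $w_{j,b}\ge0$, $\sum_{b\in\mathcal C_j}w_{j,b}=1$, and $f_i^{(\alpha)}=\sum_{b\in\mathcal C_j,b_i=\alpha}w_{j,b}$ for all $j$, $i\in\mathcal I_j$, $\alpha\in R^-$.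 A codeword $c$ is sent over a memoryless channel with input alphabet $R$, output alphabet $\Sigma$ (finite, or $\mathbb R^l$ or $\mathbb C^l$), transition probability (density) $p(y\mid a)$, so $y\in\Sigma^n$ is received with probability (density) $\prod_ip(y_i\mid c_i)$. Set $\lambda^{(\alpha)}(y)=\log(p(y\mid0)/p(y\mid\alpha))$ and let $\Lambda(y)$ have coordinates $\lambda^{(\alpha)}(y_i)$. The LP decoder minimizes $\Lambda(y)f^T$ over $(f,w)\in\mathcal Q$. A codeword error (given $c$ transmitted) is the event that $y$ lies in $B(c)=\{y\in\Sigma^n:\exists(f,w)\in\mathcal Q,\ f\ne\Xi(c),\ \Lambda(y)f^T\le\Lambda(y)\Xi(c)^T\}$. *)

theory Defs
  imports "HOL-Probability.Probability"
begin

text \<open>Parity-check matrix H : 'm => 'n => 'r (rows indexed by the finite type 'm = J,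
  columns by the finite type 'n = I). Vectors over R indexed by I are functions 'n => 'r.\<close>

definition code :: "('m::finite \<Rightarrow> 'n::finite \<Rightarrow> 'r::{ring_1,finite}) \<Rightarrow> ('n \<Rightarrow> 'r) set" where
  "code H = {c. \<forall>j. (\<Sum>i\<in>UNIV. c i * H j i) = 0}"

definition supp_row :: "('m \<Rightarrow> 'n \<Rightarrow> 'r::zero) \<Rightarrow> 'm \<Rightarrow> 'n set" where
  "supp_row H j = {i. H j i \<noteq> 0}"

text \<open>Local code C_j; an element b of R^(I_j) is represented as a function 'n => 'r
  vanishing outside I_j.\<close>
definition local_code :: "('m::finite \<Rightarrow> 'n::finite \<Rightarrow> 'r::{ring_1,finite}) \<Rightarrow> 'm \<Rightarrow> ('n \<Rightarrow> 'r) set" where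
  "local_code H j = {b. (\<forall>i. i \<notin> supp_row H j \<longrightarrow> b i = 0) \<and>
                        (\<Sum>i\<in>supp_row H j. b i * H j i) = 0}"

text \<open>The polytope Q. f i a is the coordinate f_i^(a) for a in R minus 0 (f i 0 is fixed to 0);
  w j b is w_{j,b} for b in C_j (fixed to 0 outside C_j).\<close>
definition polytope :: "('m::finite \<Rightarrow> 'n::finite \<Rightarrow> 'r::{ring_1,finite})
    \<Rightarrow> (('n \<Rightarrow> 'r \<Rightarrow> real) \<times> ('m \<Rightarrow> ('n \<Rightarrow> 'r) \<Rightarrow> real)) set" where
  "polytope H = {(f, w).
      (\<forall>i. f i 0 = 0) \<and>
      (\<forall>j b. b \<notin> local_code H j \<longrightarrow> w j b = 0) \<and>
      (\<forall>j. \<forall>b\<in>local_code H j. 0 \<le> w j b) \<and>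
      (\<forall>j. (\<Sum>b\<in>local_code H j. w j b) = 1) \<and>
      (\<forall>j. \<forall>i\<in>supp_row H j. \<forall>\<alpha>. \<alpha> \<noteq> 0 \<longrightarrow>
           f i \<alpha> = (\<Sum>b\<in>{b\<in>local_code H j. b i = \<alpha>}. w j b))}"

definition Xi :: "('n \<Rightarrow> 'r::zero) \<Rightarrow> 'n \<Rightarrow> 'r \<Rightarrow> real" where
  "Xi c = (\<lambda>i \<alpha>. if \<alpha> \<noteq> 0 \<and> c i = \<alpha> then 1 else 0)"

text \<open>Log-likelihood ratio lambda^(alpha)(y); p a y = p(y | a).\<close>
definition llr :: "('r::zero \<Rightarrow> 'y \<Rightarrow> real) \<Rightarrow> 'r \<Rightarrow> 'y \<Rightarrow> real" where
  "llr p \<alpha> y = ln (p 0 y / p \<alpha> y)"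

definition lp_cost :: "('r::{zero,finite} \<Rightarrow> 'y \<Rightarrow> real) \<Rightarrow> ('n::finite \<Rightarrow> 'y) \<Rightarrow> ('n \<Rightarrow> 'r \<Rightarrow> real) \<Rightarrow> real" where
  "lp_cost p y f = (\<Sum>i\<in>UNIV. \<Sum>\<alpha>\<in>{a. a \<noteq> 0}. llr p \<alpha> (y i) * f i \<alpha>)"

definition error_region :: "('m::finite \<Rightarrow> 'n::finite \<Rightarrow> 'r::{ring_1,finite}) \<Rightarrow> ('r \<Rightarrow> 'y \<Rightarrow> real)
    \<Rightarrow> 'y set \<Rightarrow> ('n \<Rightarrow> 'r) \<Rightarrow> ('n \<Rightarrow> 'y) set" where
  "error_region H p \<Sigma> c = {y. (\<forall>i. y i \<in> \<Sigma>) \<and>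
      (\<exists>f w. (f, w) \<in> polytope H \<and> f \<noteq> Xi c \<and> lp_cost p y f \<le> lp_cost p y (Xi c))}"

text \<open>Probability of codeword error given c transmitted: the integral over B(c) of
  prod_i p(y_i | c_i) with respect to the n-fold product of the reference measure M on Sigma
  (counting measure for finite Sigma, Lebesgue measure for R^l / C^l).\<close>
definition codeword_error_prob :: "('m::finite \<Rightarrow> 'n::finite \<Rightarrow> 'r::{ring_1,finite}) \<Rightarrow> ('r \<Rightarrow> 'y \<Rightarrow> real)
    \<Rightarrow> 'y measure \<Rightarrow> ('n \<Rightarrow> 'r) \<Rightarrow> ennreal" where
  "codeword_error_prob H p M c =
     (\<integral>\<^sup>+ y. indicator (error_region H p (space M) c) y * (\<Prod>i\<in>UNIV. ennreal (p (c i) (y i)))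
        \<partial>(PiM UNIV (\<lambda>_. M)))"

end

theory Submission
  imports Defs "HOL-Library.Function_Algebras"
begin

text \<open>
  Translation by a codeword \<open>d\<close> is a symmetry of LP decoding. Adjoin to each block of a
  pseudocodeword the implicit coordinate \<open>f_i^(0) = 1 - \<Sum>_\<alpha> f_i^(\<alpha>)\<close>; shifting every
  block by \<open>d_i\<close> and every local codeword \<open>b \<in> C_j\<close> by the restriction of \<open>d\<close> to \<open>I_j\<close>
  maps the polytope \<open>Q\<close> onto itself and \<open>\<Xi>(c)\<close> to \<open>\<Xi>(c - d)\<close>. By the channel symmetry
  the log-likelihood ratios of \<open>\<tau>_d(y)\<close> are those of \<open>y\<close> with shifted index, up to a term
  independent of the pseudocodeword, so the shift carries \<open>B(c)\<close> onto \<open>B(c - d)\<close> along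
  \<open>y \<mapsto> \<tau>_d(y)\<close>. Each \<open>\<tau>_\<beta>\<close> preserves the reference measure (trivially for counting
  measure; for Lebesgue measure because isometries map balls to balls of the same radius,
  and by Vitali's covering theorem open sets are disjoint unions of balls up to a null set),
  and it maps the likelihood of \<open>c\<close> to that of \<open>0\<close>.
\<close>

section \<open>Translating pseudocodewords by a codeword\<close>

lemma sum_UNIV_eq_zero_plus_nonzero:
  fixes h :: "'r::{zero,finite} \<Rightarrow> 'b::comm_monoid_add"
  shows "(\<Sum>g\<in>UNIV. h g) = h 0 + (\<Sum>g\<in>{a. a \<noteq> 0}. h g)"
proof -
  have "UNIV - {0::'r} = {a. a \<noteq> 0}" by auto
  thus ?thesis using sum.remove[of "UNIV::'r set" 0 h] by simp
qed

lemma sum_UNIV_add_const: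
  fixes h :: "'r::{group_add,finite} \<Rightarrow> 'b::comm_monoid_add"
  shows "(\<Sum>a\<in>UNIV. h (a + t)) = (\<Sum>a\<in>UNIV. h a)"
proof -
  have "bij (\<lambda>a. a + t)" by (rule bijI') (auto intro: exI[of _ "_ - t"])
  thus ?thesis by (rule sum.reindex_bij_betw)
qed

text \<open>The polytope only records \<open>f_i^(\<alpha>)\<close> for \<open>\<alpha> \<noteq> 0\<close>; translations need the full block.\<close>

definition complete_coords :: "('n \<Rightarrow> 'r::{zero,finite} \<Rightarrow> real) \<Rightarrow> 'n \<Rightarrow> 'r \<Rightarrow> real" where
  "complete_coords f i g = (if g = 0 then 1 - (\<Sum>a\<in>{a. a \<noteq> 0}. f i a) else f i g)"

lemma sum_complete_coords: "(\<Sum>g\<in>UNIV. complete_coords f i g) = 1"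
proof -
  have "(\<Sum>g\<in>{a. a \<noteq> 0}. complete_coords f i g) = (\<Sum>g\<in>{a. a \<noteq> 0}. f i g)"
    by (rule sum.cong) (auto simp: complete_coords_def)
  with sum_UNIV_eq_zero_plus_nonzero[of "complete_coords f i"] show ?thesis
    by (simp add: complete_coords_def)
qed

lemma sum_nonzero_eq_sum_complete_coords:
  fixes f :: "'n \<Rightarrow> 'r::{zero,finite} \<Rightarrow> real"
  assumes "L 0 = 0"
  shows "(\<Sum>\<alpha>\<in>{a. a \<noteq> 0}. L \<alpha> * f i \<alpha>) = (\<Sum>g\<in>UNIV. L g * complete_coords f i g)"
proof -
  have "(\<Sum>g\<in>{a. a \<noteq> 0}. L g * complete_coords f i g) = (\<Sum>g\<in>{a. a \<noteq> 0}. L g * f i g)"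
    by (rule sum.cong) (auto simp: complete_coords_def)
  with sum_UNIV_eq_zero_plus_nonzero[of "\<lambda>g. L g * complete_coords f i g"] show ?thesis
    using assms by simp
qed

definition pcw_shift :: "('n \<Rightarrow> 'r::{ring_1,finite}) \<Rightarrow> ('n \<Rightarrow> 'r \<Rightarrow> real) \<Rightarrow> 'n \<Rightarrow> 'r \<Rightarrow> real" where
  "pcw_shift d f i a = (if a = 0 then 0 else complete_coords f i (a + d i))"

lemma complete_coords_Xi: "complete_coords (Xi c) i g = (if c i = g then 1 else 0)"
proof (cases "g = 0")
  case True
  have "(\<Sum>a\<in>{a. a \<noteq> 0}. Xi c i a) = (if c i \<noteq> 0 then 1 else 0)"
    unfolding Xi_def by (simp add: sum.delta'[of "{a. a \<noteq> 0}"] if_distrib cong: if_cong)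
  thus ?thesis using True by (simp add: complete_coords_def)
qed (auto simp: complete_coords_def Xi_def)

lemma pcw_shift_Xi: "pcw_shift d (Xi c) = Xi (c - d)"
  by (intro ext) (simp add: pcw_shift_def complete_coords_Xi, auto simp: Xi_def)

lemma pcw_shift_inj:
  fixes f g :: "'n \<Rightarrow> 'r::{ring_1,finite} \<Rightarrow> real"
  assumes f0: "\<forall>i. f i 0 = 0" and g0: "\<forall>i. g i 0 = 0" and eq: "pcw_shift d f = pcw_shift d g"
  shows "f = g"
proof (intro ext)
  fix i a
  have ne: "complete_coords f i x = complete_coords g i x" if "x \<noteq> d i" for x
    using fun_cong[OF fun_cong[OF eq, of i], of "x - d i"] that by (simp add: pcw_shift_def)
  have split: "(\<Sum>x\<in>UNIV. complete_coords h i x)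
      = complete_coords h i (d i) + (\<Sum>x\<in>UNIV - {d i}. complete_coords h i x)"
    for h :: "'n \<Rightarrow> 'r \<Rightarrow> real"
    by (rule sum.remove) auto
  have "(\<Sum>x\<in>UNIV - {d i}. complete_coords f i x) = (\<Sum>x\<in>UNIV - {d i}. complete_coords g i x)"
    by (rule sum.cong) (auto intro: ne)
  \<comment> \<open>the one block entry hidden by the shift is recovered from the block sum\<close>
  hence "complete_coords f i (d i) = complete_coords g i (d i)"
    using split[of f] split[of g] by (simp add: sum_complete_coords)
  hence "complete_coords f i x = complete_coords g i x" for x using ne by (cases "x = d i") auto
  thus "f i a = g i a" using f0 g0 by (metis complete_coords_def)
qed

lemma llr_zero [simp]: "llr p 0 y = 0"
  by (simp add: llr_def)

lemma lp_cost_pcw_shift: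
  fixes f :: "'n::finite \<Rightarrow> 'r::{ring_1,finite} \<Rightarrow> real"
  assumes llr: "\<And>i \<alpha>. llr p \<alpha> (y' i) = llr p (\<alpha> + d i) (y i) - llr p (d i) (y i)"
  shows "lp_cost p y' (pcw_shift d f) = lp_cost p y f - (\<Sum>i\<in>UNIV. llr p (d i) (y i))"
proof -
  have "(\<Sum>\<alpha>\<in>{a. a \<noteq> 0}. llr p \<alpha> (y' i) * pcw_shift d f i \<alpha>) =
        (\<Sum>\<alpha>\<in>{a. a \<noteq> 0}. llr p \<alpha> (y i) * f i \<alpha>) - llr p (d i) (y i)" for i
  proof -
    let ?G = "\<lambda>g. (llr p g (y i) - llr p (d i) (y i)) * complete_coords f i g"
    have "(\<Sum>\<alpha>\<in>{a. a \<noteq> 0}. llr p \<alpha> (y' i) * pcw_shift d f i \<alpha>) = (\<Sum>\<alpha>\<in>{a. a \<noteq> 0}. ?G (\<alpha> + d i))"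
      by (rule sum.cong) (auto simp: pcw_shift_def llr)
    also have "\<dots> = (\<Sum>\<alpha>\<in>UNIV. ?G (\<alpha> + d i))"
      by (simp add: sum_UNIV_eq_zero_plus_nonzero[of "\<lambda>\<alpha>. ?G (\<alpha> + d i)"])
    also have "\<dots> = (\<Sum>g\<in>UNIV. ?G g)" by (rule sum_UNIV_add_const)
    also have "\<dots> = (\<Sum>g\<in>UNIV. llr p g (y i) * complete_coords f i g)
                    - llr p (d i) (y i) * (\<Sum>g\<in>UNIV. complete_coords f i g)"
      by (simp add: algebra_simps sum_subtractf sum_distrib_left sum_distrib_right)
    also have "\<dots> = (\<Sum>\<alpha>\<in>{a. a \<noteq> 0}. llr p \<alpha> (y i) * f i \<alpha>) - llr p (d i) (y i)"
      by (simp add: sum_complete_coords sum_nonzero_eq_sum_complete_coords[where L="\<lambda>g. llr p g (y i)"])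
    finally show ?thesis .
  qed
  thus ?thesis by (simp add: lp_cost_def sum_subtractf)
qed

definition restrict_row :: "('m \<Rightarrow> 'n \<Rightarrow> 'r::zero) \<Rightarrow> ('n \<Rightarrow> 'r) \<Rightarrow> 'm \<Rightarrow> 'n \<Rightarrow> 'r" where
  "restrict_row H d j = (\<lambda>i. if i \<in> supp_row H j then d i else 0)"

lemma restrict_row_in_local_code:
  fixes H :: "'m::finite \<Rightarrow> 'n::finite \<Rightarrow> 'r::{ring_1,finite}"
  assumes "d \<in> code H"
  shows "restrict_row H d j \<in> local_code H j"
proof -
  have "(\<Sum>i\<in>supp_row H j. d i * H j i) = (\<Sum>i\<in>UNIV. d i * H j i)"
    by (rule sum.mono_neutral_left) (auto simp: supp_row_def)
  also have "\<dots> = 0" using assms by (simp add: code_def)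
  finally show ?thesis by (auto simp: local_code_def restrict_row_def)
qed

lemma local_code_add_diff:
  fixes H :: "'m::finite \<Rightarrow> 'n::finite \<Rightarrow> 'r::{ring_1,finite}"
  assumes "a \<in> local_code H j" "b \<in> local_code H j"
  shows "a + b \<in> local_code H j" "a - b \<in> local_code H j"
  using assms
  by (auto simp: local_code_def distrib_right left_diff_distrib sum.distrib sum_subtractf)

lemma bij_betw_add_local_code:
  fixes H :: "'m::finite \<Rightarrow> 'n::finite \<Rightarrow> 'r::{ring_1,finite}"
  assumes "t \<in> local_code H j"
  shows "bij_betw (\<lambda>b. b + t) (local_code H j) (local_code H j)"
proof (rule bij_betw_byWitness[where f' = "\<lambda>b. b - t"])
  show "(\<lambda>b. b + t) ` local_code H j \<subseteq> local_code H j"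
    and "(\<lambda>b. b - t) ` local_code H j \<subseteq> local_code H j"
    using assms local_code_add_diff by blast+
qed auto

lemma bij_betw_add_fiber:
  fixes t :: "'n \<Rightarrow> 'r::ab_group_add"
  assumes "bij_betw (\<lambda>b. b + t) C C"
  shows "bij_betw (\<lambda>b. b + t) {b\<in>C. b i = a} {b\<in>C. b i = a + t i}"
proof (rule bij_betw_imageI)
  show "inj_on (\<lambda>b. b + t) {b\<in>C. b i = a}" by (auto intro: inj_onI)
  show "(\<lambda>b. b + t) ` {b\<in>C. b i = a} = {b\<in>C. b i = a + t i}"
  proof
    show "(\<lambda>b. b + t) ` {b\<in>C. b i = a} \<subseteq> {b\<in>C. b i = a + t i}"
      using bij_betwE[OF assms] by auto
    show "{b\<in>C. b i = a + t i} \<subseteq> (\<lambda>b. b + t) ` {b\<in>C. b i = a}"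
    proof
      fix b assume b: "b \<in> {b\<in>C. b i = a + t i}"
      then obtain b' where "b' \<in> C" "b = b' + t"
        using assms by (auto simp: bij_betw_def)
      with b show "b \<in> (\<lambda>b. b + t) ` {b\<in>C. b i = a}" by auto
    qed
  qed
qed

lemma complete_coords_eq_fiber_sum:
  fixes H :: "'m::finite \<Rightarrow> 'n::finite \<Rightarrow> 'r::{ring_1,finite}"
  assumes fw: "(f, w) \<in> polytope H" and i: "i \<in> supp_row H j"
  shows "complete_coords f i g = (\<Sum>b\<in>{b\<in>local_code H j. b i = g}. w j b)"
proof (cases "g = 0")
  case False thus ?thesis using fw i by (auto simp: polytope_def complete_coords_def)
next
  case True
  let ?F = "\<lambda>a. \<Sum>b\<in>{b\<in>local_code H j. b i = a}. w j b"
  have "(\<Sum>a\<in>UNIV. ?F a) = (\<Sum>b\<in>local_code H j. w j b)"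
    by (rule sum.group) auto
  also have "\<dots> = 1" using fw by (simp add: polytope_def)
  finally have "?F 0 + (\<Sum>a\<in>{a. a \<noteq> 0}. ?F a) = 1"
    by (simp add: sum_UNIV_eq_zero_plus_nonzero[of ?F])
  moreover have "(\<Sum>a\<in>{a. a \<noteq> 0}. ?F a) = (\<Sum>a\<in>{a. a \<noteq> 0}. f i a)"
    using fw i by (intro sum.cong) (auto simp: polytope_def)
  ultimately show ?thesis using True by (simp add: complete_coords_def)
qed

definition local_weights_shift :: "('m::finite \<Rightarrow> 'n::finite \<Rightarrow> 'r::{ring_1,finite}) \<Rightarrow> ('n \<Rightarrow> 'r)
    \<Rightarrow> ('m \<Rightarrow> ('n \<Rightarrow> 'r) \<Rightarrow> real) \<Rightarrow> 'm \<Rightarrow> ('n \<Rightarrow> 'r) \<Rightarrow> real" where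
  "local_weights_shift H d w j b = (if b \<in> local_code H j then w j (b + restrict_row H d j) else 0)"

lemma pcw_shift_in_polytope:
  fixes H :: "'m::finite \<Rightarrow> 'n::finite \<Rightarrow> 'r::{ring_1,finite}"
  assumes d: "d \<in> code H" and fw: "(f, w) \<in> polytope H"
  shows "(pcw_shift d f, local_weights_shift H d w) \<in> polytope H"
proof -
  let ?w = "local_weights_shift H d w"
  have bij: "bij_betw (\<lambda>b. b + restrict_row H d j) (local_code H j) (local_code H j)" for j
    by (rule bij_betw_add_local_code[OF restrict_row_in_local_code[OF d]])
  have nonneg: "0 \<le> ?w j b" if b: "b \<in> local_code H j" for j b
  proof -
    have "b + restrict_row H d j \<in> local_code H j" using bij_betwE[OF bij] b by blast
    with fw b show ?thesis by (simp add: polytope_def local_weights_shift_def)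
  qed
  have sum_one: "(\<Sum>b\<in>local_code H j. ?w j b) = 1" for j
  proof -
    have "(\<Sum>b\<in>local_code H j. ?w j b) = (\<Sum>b\<in>local_code H j. w j (b + restrict_row H d j))"
      by (rule sum.cong) (auto simp: local_weights_shift_def)
    also have "\<dots> = (\<Sum>b\<in>local_code H j. w j b)"
      by (rule sum.reindex_bij_betw[OF bij])
    finally show ?thesis using fw by (simp add: polytope_def)
  qed
  have marginal: "pcw_shift d f i a = (\<Sum>b\<in>{b\<in>local_code H j. b i = a}. ?w j b)"
    if i: "i \<in> supp_row H j" and a: "a \<noteq> 0" for i j a
  proof -
    have "restrict_row H d j i = d i" using i by (simp add: restrict_row_def)
    with bij_betw_add_fiber[OF bij[of j], where i = i and a = a]
    have fiber: "bij_betw (\<lambda>b. b + restrict_row H d j)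
        {b\<in>local_code H j. b i = a} {b\<in>local_code H j. b i = a + d i}"
      by simp
    have "(\<Sum>b\<in>{b\<in>local_code H j. b i = a}. ?w j b)
        = (\<Sum>b\<in>{b\<in>local_code H j. b i = a}. w j (b + restrict_row H d j))"
      by (rule sum.cong) (auto simp: local_weights_shift_def)
    also have "\<dots> = (\<Sum>b\<in>{b\<in>local_code H j. b i = a + d i}. w j b)"
      by (rule sum.reindex_bij_betw[OF fiber])
    also have "\<dots> = complete_coords f i (a + d i)" using complete_coords_eq_fiber_sum[OF fw i] by simp
    finally show ?thesis using a by (simp add: pcw_shift_def)
  qed
  have "\<forall>i. pcw_shift d f i 0 = 0" "\<forall>j b. b \<notin> local_code H j \<longrightarrow> ?w j b = 0"
    by (simp_all add: pcw_shift_def local_weights_shift_def)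
  with nonneg sum_one marginal show ?thesis
    unfolding polytope_def by (simp only: mem_Collect_eq case_prod_conv) blast
qed

lemma error_region_shift:
  fixes H :: "'m::finite \<Rightarrow> 'n::finite \<Rightarrow> 'r::{ring_1,finite}"
  assumes d: "d \<in> code H"
    and llr: "\<And>i \<alpha>. llr p \<alpha> (y' i) = llr p (\<alpha> + d i) (y i) - llr p (d i) (y i)"
    and y': "\<forall>i. y' i \<in> S"
    and y: "y \<in> error_region H p S c"
  shows "y' \<in> error_region H p S (c - d)"
proof -
  obtain f w where fw: "(f, w) \<in> polytope H" and ne: "f \<noteq> Xi c"
    and le: "lp_cost p y f \<le> lp_cost p y (Xi c)"
    using y by (auto simp: error_region_def)
  have "pcw_shift d f \<noteq> Xi (c - d)"
  proof
    assume "pcw_shift d f = Xi (c - d)"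
    hence "pcw_shift d f = pcw_shift d (Xi c)" by (simp add: pcw_shift_Xi)
    moreover have "\<forall>i. f i 0 = 0" using fw by (simp add: polytope_def)
    moreover have "\<forall>i. Xi c i 0 = 0" by (simp add: Xi_def)
    ultimately have "f = Xi c" using pcw_shift_inj by blast
    with ne show False ..
  qed
  moreover have "lp_cost p y' (pcw_shift d f) \<le> lp_cost p y' (Xi (c - d))"
    using le lp_cost_pcw_shift[OF llr, where f = f] lp_cost_pcw_shift[OF llr, where f = "Xi c"]
    by (simp add: pcw_shift_Xi)
  ultimately show ?thesis
    using y' pcw_shift_in_polytope[OF d fw] unfolding error_region_def mem_Collect_eq by blast
qed

section \<open>Measure-preserving bijections\<close>

definition measure_preserving_bij :: "'a measure \<Rightarrow> ('a \<Rightarrow> 'a) \<Rightarrow> bool" where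
  "measure_preserving_bij M t \<longleftrightarrow> bij_betw t (space M) (space M) \<and> t \<in> measurable M M \<and>
     inv_into (space M) t \<in> measurable M M \<and> distr M M t = M"

lemma measure_preserving_bij_inv:
  assumes "measure_preserving_bij M t"
  shows "measure_preserving_bij M (inv_into (space M) t)"
proof -
  let ?s = "inv_into (space M) t"
  have bij: "bij_betw t (space M) (space M)" and t: "t \<in> measurable M M"
    and s: "?s \<in> measurable M M" and distr_t: "distr M M t = M"
    using assms by (auto simp: measure_preserving_bij_def)
  have st: "?s (t x) = x" if "x \<in> space M" for x
    using bij that by (simp add: bij_betw_inv_into_left)
  have "inv_into (space M) ?s \<in> measurable M M"
    using t by (rule measurable_cong[THEN iffD1, rotated])
      (use bij in \<open>simp add: inv_into_inv_into_eq\<close>)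
  moreover have "distr M M ?s = M"
  proof -
    have "distr M M ?s = distr M M (?s \<circ> t)"
      using distr_distr[OF s t] distr_t by simp
    also have "\<dots> = distr M M (\<lambda>x. x)" by (rule distr_cong) (simp_all add: st)
    finally show ?thesis by simp
  qed
  ultimately show ?thesis
    using bij s by (simp add: measure_preserving_bij_def bij_betw_inv_into)
qed

lemma nn_integral_measure_preserving_bij_le:
  assumes "measure_preserving_bij N T"
  shows "(\<integral>\<^sup>+x. f (T x) \<partial>N) \<le> (\<integral>\<^sup>+x. f x \<partial>N)"
proof -
  let ?S = "inv_into (space N) T"
  have bij: "bij_betw T (space N) (space N)" and T: "T \<in> measurable N N"
    and S: "?S \<in> measurable N N" and D: "distr N N T = N"
    using assms by (auto simp: measure_preserving_bij_def)
  \<comment> \<open>\<open>f\<close> need not be measurable: transport the simple functions below \<open>f \<circ> T\<close> along \<open>T\<^sup>-\<^sup>1\<close>\<close>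
  have "integral\<^sup>S N g \<le> (\<integral>\<^sup>+x. f x \<partial>N)"
    if g: "simple_function N g" "g \<le> (\<lambda>x. f (T x))" for g
  proof -
    define h where "h x = (if x \<in> space N then g (?S x) else 0)" for x
    have "(\<lambda>x. g (?S x)) \<in> borel_measurable N"
      using measurable_compose[OF S borel_measurable_simple_function[OF g(1)]] .
    hence hm: "h \<in> borel_measurable N"
      by (rule measurable_cong[THEN iffD1, rotated]) (simp add: h_def)
    have "h ` space N \<subseteq> g ` space N"
      using measurable_space[OF S] by (auto simp: h_def)
    hence "finite (h ` space N)"
      using simple_functionD(1)[OF g(1)] finite_subset by blast
    hence hs: "simple_function N h" using hm by (simp add: simple_function_iff_borel_measurable)
    have hf: "h x \<le> f x" if "x \<in> space N" for x
      using le_funD[OF g(2), of "?S x"] that bij by (simp add: h_def bij_betw_inv_into_right)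
    have "integral\<^sup>S N g = (\<integral>\<^sup>+x. h (T x) \<partial>N)"
      using g(1) bij measurable_space[OF T]
      by (simp add: nn_integral_eq_simple_integral[symmetric] h_def bij_betw_inv_into_left
          cong: nn_integral_cong)
    also have "\<dots> = integral\<^sup>N (distr N N T) h"
      using T hm by (simp add: nn_integral_distr)
    also have "\<dots> \<le> (\<integral>\<^sup>+x. f x \<partial>N)"
      using D hf by (simp add: nn_integral_mono)
    finally show ?thesis .
  qed
  thus ?thesis
    unfolding nn_integral_def[of N "\<lambda>x. f (T x)"] by (blast intro: SUP_least)
qed

lemma nn_integral_measure_preserving_bij:
  assumes T: "measure_preserving_bij N T"
  shows "(\<integral>\<^sup>+x. f (T x) \<partial>N) = (\<integral>\<^sup>+x. f x \<partial>N)"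
proof (rule antisym)
  show "(\<integral>\<^sup>+x. f (T x) \<partial>N) \<le> (\<integral>\<^sup>+x. f x \<partial>N)" by (rule nn_integral_measure_preserving_bij_le[OF T])
  let ?S = "inv_into (space N) T"
  have "bij_betw T (space N) (space N)" using T by (simp add: measure_preserving_bij_def)
  hence "(\<integral>\<^sup>+x. f x \<partial>N) = (\<integral>\<^sup>+x. f (T (?S x)) \<partial>N)"
    by (intro nn_integral_cong) (simp add: bij_betw_inv_into_right)
  also have "\<dots> \<le> (\<integral>\<^sup>+x. f (T x) \<partial>N)"
    by (rule nn_integral_measure_preserving_bij_le[OF measure_preserving_bij_inv[OF T]])
  finally show "(\<integral>\<^sup>+x. f x \<partial>N) \<le> (\<integral>\<^sup>+x. f (T x) \<partial>N)" .
qed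

lemma measure_preserving_bij_count_space:
  assumes "bij_betw t X X"
  shows "measure_preserving_bij (count_space X) t"
  using assms bij_betwE[OF assms] bij_betwE[OF bij_betw_inv_into[OF assms]]
  by (simp add: measure_preserving_bij_def distr_bij_count_space)

lemma space_PiM_UNIV: "space (PiM UNIV (\<lambda>_. M)) = {y. \<forall>i. y i \<in> space M}"
  by (auto simp: space_PiM PiE_iff)

lemma measurable_PiM_componentwise:
  fixes t :: "'n::finite \<Rightarrow> 'y \<Rightarrow> 'y"
  assumes "\<And>i. t i \<in> measurable M M"
  shows "(\<lambda>y i. t i (y i)) \<in> measurable (PiM UNIV (\<lambda>_. M)) (PiM UNIV (\<lambda>_. M))"
proof (rule measurable_PiM_single')
  show "(\<lambda>y. t i (y i)) \<in> measurable (PiM UNIV (\<lambda>_. M)) M" for i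
    using measurable_compose[OF measurable_component_singleton[of i UNIV "\<lambda>_. M"] assms[of i]]
    by simp
  show "(\<lambda>y i. t i (y i)) \<in> space (PiM UNIV (\<lambda>_. M)) \<rightarrow> (\<Pi>\<^sub>E i\<in>UNIV. space M)"
    using measurable_space[OF assms] by (auto simp: space_PiM PiE_iff)
qed

lemma distr_PiM_componentwise:
  fixes t :: "'n::finite \<Rightarrow> 'y \<Rightarrow> 'y"
  assumes "sigma_finite_measure M" and t: "\<And>i. t i \<in> measurable M M"
    and distr_t: "\<And>i. distr M M (t i) = M"
  shows "distr (PiM UNIV (\<lambda>_. M)) (PiM UNIV (\<lambda>_. M)) (\<lambda>y i. t i (y i)) = PiM UNIV (\<lambda>_. M)"
proof -
  interpret product_sigma_finite "\<lambda>_::'n. M"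
    using assms(1) by (simp add: product_sigma_finite_def)
  let ?N = "PiM UNIV (\<lambda>_::'n. M)" and ?T = "\<lambda>y i. t i (y i)"
  show ?thesis
  proof (rule PiM_eqI)
    fix A :: "'n \<Rightarrow> 'y set" assume A: "\<And>i. i \<in> UNIV \<Longrightarrow> A i \<in> sets M"
    have "?T -` (\<Pi>\<^sub>E i\<in>UNIV. A i) \<inter> space ?N = (\<Pi>\<^sub>E i\<in>UNIV. t i -` A i \<inter> space M)"
      by (auto simp: space_PiM PiE_iff)
    hence "emeasure (distr ?N ?N ?T) (\<Pi>\<^sub>E i\<in>UNIV. A i)
        = emeasure ?N (\<Pi>\<^sub>E i\<in>UNIV. t i -` A i \<inter> space M)"
      using A by (subst emeasure_distr[OF measurable_PiM_componentwise[OF t]])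
        (auto intro!: sets_PiM_I_finite)
    also have "\<dots> = (\<Prod>i\<in>UNIV. emeasure M (t i -` A i \<inter> space M))"
      using A by (intro emeasure_PiM) (auto intro!: measurable_sets[OF t])
    also have "\<dots> = (\<Prod>i\<in>UNIV. emeasure M (A i))"
      using A by (intro prod.cong refl) (metis distr_t emeasure_distr[OF t] UNIV_I)
    finally show "emeasure (distr ?N ?N ?T) (\<Pi>\<^sub>E i\<in>UNIV. A i) = (\<Prod>i\<in>UNIV. emeasure M (A i))" .
  qed simp_all
qed

lemma measure_preserving_bij_PiM:
  fixes t :: "'n::finite \<Rightarrow> 'y \<Rightarrow> 'y"
  assumes "sigma_finite_measure M" and t: "\<And>i. measure_preserving_bij M (t i)"
  shows "measure_preserving_bij (PiM UNIV (\<lambda>_. M)) (\<lambda>y i. t i (y i))"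
proof -
  let ?N = "PiM UNIV (\<lambda>_::'n. M)" and ?T = "\<lambda>y i. t i (y i)"
  let ?S = "\<lambda>y i. inv_into (space M) (t i) (y i)"
  have bij: "\<And>i. bij_betw (t i) (space M) (space M)"
    and meas: "\<And>i. t i \<in> measurable M M" "\<And>i. inv_into (space M) (t i) \<in> measurable M M"
    and distr_t: "\<And>i. distr M M (t i) = M"
    using t by (auto simp: measure_preserving_bij_def)
  have S_in: "?S y \<in> space ?N" and TS: "?T (?S y) = y" if "y \<in> space ?N" for y
    using that bij_betwE[OF bij_betw_inv_into[OF bij]] bij_betw_inv_into_right[OF bij]
    by (auto simp: space_PiM_UNIV)
  have bij_T: "bij_betw ?T (space ?N) (space ?N)"
    using bij_betwE[OF bij] bij_betwE[OF bij_betw_inv_into[OF bij]]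
      bij_betw_inv_into_left[OF bij] bij_betw_inv_into_right[OF bij]
    by (intro bij_betw_byWitness[where f' = ?S]) (auto simp: space_PiM_UNIV)
  have "inv_into (space ?N) ?T y = ?S y" if "y \<in> space ?N" for y
    using bij_T S_in[OF that] TS[OF that] by (intro inv_into_f_eq) (auto simp: bij_betw_def)
  hence "inv_into (space ?N) ?T \<in> measurable ?N ?N"
    using measurable_PiM_componentwise[OF meas(2)] by (simp cong: measurable_cong)
  thus ?thesis
    using bij_T measurable_PiM_componentwise[where t = t, OF meas(1)]
      distr_PiM_componentwise[where t = t, OF assms(1) meas(1) distr_t]
    by (simp add: measure_preserving_bij_def)
qed

section \<open>Isometries of Euclidean space preserve Lebesgue measure\<close>

lemma isometry_continuous_on:
  assumes "\<forall>x y. dist (s x) (s y) = dist x y"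
  shows "continuous_on S s"
  unfolding continuous_on_iff using assms by metis

lemma isometry_inv:
  assumes "bij s" and iso: "\<forall>x y. dist (s x) (s y) = dist x y"
  shows "\<forall>x y. dist (inv s x) (inv s y) = dist x y"
  using iso bij_inv_eq_iff[OF assms(1)] by metis

lemma isometry_image_ball:
  assumes "surj s" and iso: "\<forall>x y. dist (s x) (s y) = dist x y"
  shows "s ` ball x r = ball (s x) r"
proof
  show "s ` ball x r \<subseteq> ball (s x) r" using iso by auto
  show "ball (s x) r \<subseteq> s ` ball x r"
  proof
    fix z assume z: "z \<in> ball (s x) r"
    obtain w where w: "z = s w" using assms(1) by (metis surjD)
    with z iso show "z \<in> s ` ball x r" by auto
  qed
qed

lemma negligible_isometry_image:
  fixes s :: "'a::euclidean_space \<Rightarrow> 'a"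
  assumes iso: "\<forall>x y. dist (s x) (s y) = dist x y" and "negligible N"
  shows "negligible (s ` N)"
proof (rule negligible_locally_Lipschitz_image[OF _ \<open>negligible N\<close>])
  show "\<exists>T B. open T \<and> x \<in> T \<and> (\<forall>y\<in>N \<inter> T. norm (s y - s x) \<le> B * norm (y - x))" for x
    using iso by (intro exI[of _ UNIV] exI[of _ 1]) (simp add: dist_norm)
qed simp

lemma open_Vitali_balls:
  fixes U :: "'a::euclidean_space set"
  assumes "open U"
  obtains C where "countable C" "\<forall>i\<in>C. 0 < snd i \<and> ball (fst i) (snd i) \<subseteq> U"
    "disjoint_family_on (\<lambda>i. ball (fst i) (snd i)) C"
    "negligible (U - (\<Union>i\<in>C. ball (fst i) (snd i)))"
proof -
  let ?K = "{(x, r::real). 0 < r \<and> ball x r \<subseteq> U}"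
  have "\<exists>i. i \<in> ?K \<and> x \<in> ball (fst i) (snd i) \<and> snd i < d" if "x \<in> U" "0 < d" for x d
  proof -
    obtain e where "e > 0" "ball x e \<subseteq> U" using assms \<open>x \<in> U\<close> by (meson open_contains_ball)
    thus ?thesis using \<open>0 < d\<close> by (intro exI[of _ "(x, min e (d/2))"]) auto
  qed
  then obtain C where "countable C" "C \<subseteq> ?K"
    "pairwise (\<lambda>i j. disjnt (ball (fst i) (snd i)) (ball (fst j) (snd j))) C"
    "negligible (U - (\<Union>i\<in>C. ball (fst i) (snd i)))"
    using Vitali_covering_theorem_balls[of U ?K fst snd] by blast
  thus ?thesis
    by (intro that) (force simp: disjoint_family_on_def pairwise_def disjnt_def)+
qed

lemma emeasure_lebesgue_disjoint_balls_Un_negligible: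
  fixes a :: "'i \<Rightarrow> 'a::euclidean_space"
  assumes "countable C" and disj: "disjoint_family_on (\<lambda>i. ball (a i) (r i)) C"
    and r: "\<forall>i\<in>C. 0 \<le> r i" and "negligible N"
  shows "emeasure lebesgue ((\<Union>i\<in>C. ball (a i) (r i)) \<union> N)
    = (\<integral>\<^sup>+i. ennreal (r i ^ DIM('a)) * emeasure lebesgue (ball (0::'a) 1) \<partial>count_space C)"
proof -
  have balls: "ball x e \<in> sets lebesgue" for x :: 'a and e
    by (simp add: sets_completionI_sets)
  have "emeasure lebesgue ((\<Union>i\<in>C. ball (a i) (r i)) \<union> N) = emeasure lebesgue (\<Union>i\<in>C. ball (a i) (r i))"
    using \<open>negligible N\<close> \<open>countable C\<close> balls
    by (intro emeasure_Un_null_set sets.countable_UN'') (auto simp: negligible_iff_null_sets)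
  also have "\<dots> = (\<integral>\<^sup>+i. emeasure lebesgue (ball (a i) (r i)) \<partial>count_space C)"
    by (rule emeasure_UN_countable[OF balls \<open>countable C\<close> disj])
  also have "\<dots> = (\<integral>\<^sup>+i. ennreal (r i ^ DIM('a)) * emeasure lebesgue (ball (0::'a) 1) \<partial>count_space C)"
    using r by (intro nn_integral_cong emeasure_lebesgue_ball_conv_unit_ball) simp
  finally show ?thesis .
qed

lemma emeasure_lebesgue_isometry_image_open:
  fixes s :: "'a::euclidean_space \<Rightarrow> 'a"
  assumes "bij s" and iso: "\<forall>x y. dist (s x) (s y) = dist x y" and "open U"
  shows "emeasure lebesgue (s ` U) = emeasure lebesgue U"
proof -
  obtain C where C: "countable C" "\<forall>i\<in>C. 0 < snd i \<and> ball (fst i) (snd i) \<subseteq> U"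
    and disj: "disjoint_family_on (\<lambda>i. ball (fst i) (snd i)) C"
    and neg: "negligible (U - (\<Union>i\<in>C. ball (fst i) (snd i)))"
    using open_Vitali_balls[OF \<open>open U\<close>] by blast
  define N where "N = U - (\<Union>i\<in>C. ball (fst i) (snd i))"
  have ball_s: "s ` ball (fst i) (snd i) = ball (s (fst i)) (snd i)" for i
    by (rule isometry_image_ball[OF bij_is_surj[OF \<open>bij s\<close>] iso])
  have U: "U = (\<Union>i\<in>C. ball (fst i) (snd i)) \<union> N" using C(2) by (auto simp: N_def)
  hence sU: "s ` U = (\<Union>i\<in>C. ball (s (fst i)) (snd i)) \<union> s ` N"
    by (simp add: image_Un image_UN ball_s)
  have "disjoint_family_on (\<lambda>i. s ` ball (fst i) (snd i)) C"
    using disj bij_is_inj[OF \<open>bij s\<close>] by (auto simp: disjoint_family_on_def simp flip: image_Int)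
  hence disj_s: "disjoint_family_on (\<lambda>i. ball (s (fst i)) (snd i)) C"
    by (simp add: ball_s)
  have r: "\<forall>i\<in>C. 0 \<le> snd i" using C(2) by auto
  show ?thesis
    using emeasure_lebesgue_disjoint_balls_Un_negligible[OF C(1) disj r neg[folded N_def]]
      emeasure_lebesgue_disjoint_balls_Un_negligible[OF C(1) disj_s r
        negligible_isometry_image[OF iso neg[folded N_def]]]
    by (simp flip: U sU)
qed

lemma distr_lborel_isometry:
  fixes t :: "'a::euclidean_space \<Rightarrow> 'a"
  assumes "bij t" and iso: "\<forall>x y. dist (t x) (t y) = dist x y"
  shows "distr lborel lborel t = lborel"
proof (rule lborel_eqI[symmetric])
  fix l u :: 'a assume lu: "\<And>b. b \<in> Basis \<Longrightarrow> l \<bullet> b \<le> u \<bullet> b"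
  have t: "t \<in> measurable lborel lborel"
    by (simp add: borel_measurable_continuous_onI isometry_continuous_on[OF iso])
  have "open (t -` box l u)"
    using continuous_on_open_vimage[OF open_UNIV] isometry_continuous_on[OF iso]
    by (metis open_box inf_top_right)
  have "emeasure (distr lborel lborel t) (box l u) = emeasure lebesgue (t -` box l u)"
    using t \<open>open (t -` box l u)\<close> by (simp add: emeasure_distr)
  also have "\<dots> = emeasure lebesgue (box l u)"
    unfolding bij_vimage_eq_inv_image[OF \<open>bij t\<close>]
    using \<open>bij t\<close> iso
    by (intro emeasure_lebesgue_isometry_image_open) (auto simp: bij_imp_bij_inv isometry_inv)
  finally show "emeasure (distr lborel lborel t) (box l u) = (\<Prod>b\<in>Basis. (u - l) \<bullet> b)"
    using lu by (simp add: emeasure_lborel_box_eq)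
qed simp

lemma measure_preserving_bij_lborel_isometry:
  fixes t :: "'a::euclidean_space \<Rightarrow> 'a"
  assumes "bij t" and iso: "\<forall>x y. dist (t x) (t y) = dist x y"
  shows "measure_preserving_bij lborel t"
  using assms isometry_inv[OF assms]
  by (simp add: measure_preserving_bij_def borel_measurable_continuous_onI isometry_continuous_on
      distr_lborel_isometry)

section \<open>Symmetric channels\<close>

lemma llr_symmetric_shift:
  fixes p :: "'r::group_add \<Rightarrow> 'y \<Rightarrow> real"
  assumes pos: "\<forall>a. 0 < p a y" "\<forall>a. 0 < p a z"
    and sym: "\<forall>a. p a y = p (a - \<beta>) z"
  shows "llr p \<alpha> z = llr p (\<alpha> + \<beta>) y - llr p \<beta> y"
proof -
  have "p 0 z = p \<beta> y" "p \<alpha> z = p (\<alpha> + \<beta>) y"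
    using sym[rule_format, of \<beta>] sym[rule_format, of "\<alpha> + \<beta>"] by simp_all
  moreover have "0 < p 0 y" "0 < p \<beta> y" "0 < p (\<alpha> + \<beta>) y" using pos by auto
  ultimately show ?thesis by (simp add: llr_def ln_div)
qed

lemma error_region_translate:
  fixes H :: "'m::finite \<Rightarrow> 'n::finite \<Rightarrow> 'r::{ring_1,finite}"
  assumes p_pos: "\<forall>a. \<forall>y\<in>S. 0 < p a y"
    and tau: "\<forall>\<beta>. \<forall>y\<in>S. \<tau> \<beta> y \<in> S"
    and symmetric: "\<forall>\<beta> \<alpha>. \<forall>y\<in>S. p \<alpha> y = p (\<alpha> - \<beta>) (\<tau> \<beta> y)"
    and c: "c \<in> code H" and y: "\<forall>i. y i \<in> S"
  shows "y \<in> error_region H p S c \<longleftrightarrow> (\<lambda>i. \<tau> (c i) (y i)) \<in> error_region H p S 0"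
proof -
  let ?y' = "\<lambda>i. \<tau> (c i) (y i)"
  have y': "\<forall>i. ?y' i \<in> S" using tau y by simp
  have llr: "llr p \<alpha> (?y' i) = llr p (\<alpha> + c i) (y i) - llr p (c i) (y i)" for i \<alpha>
    using p_pos symmetric y y' by (intro llr_symmetric_shift) auto
  have minus_c: "- c \<in> code H"
    using c by (simp add: code_def sum_negf)
  have llr': "llr p \<alpha> (y i) = llr p (\<alpha> + (- c) i) (?y' i) - llr p ((- c) i) (?y' i)" for i \<alpha>
    using llr[where \<alpha> = "\<alpha> - c i" and i = i] llr[where \<alpha> = "- c i" and i = i] by simp
  show ?thesis
    using error_region_shift[OF c llr y', where c = c]
      error_region_shift[OF minus_c llr' y, where c = 0, unfolded diff_0 minus_minus]
    by auto
qed

lemma codeword_error_prob_eq_zero_codeword: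
  fixes H :: "'m::finite \<Rightarrow> 'n::finite \<Rightarrow> 'r::{ring_1,finite}" and M :: "'y measure"
  assumes "sigma_finite_measure M" and tau: "\<And>\<beta>. measure_preserving_bij M (\<tau> \<beta>)"
    and p_pos: "\<forall>a. \<forall>y\<in>space M. 0 < p a y"
    and symmetric: "\<forall>\<beta> \<alpha>. \<forall>y\<in>space M. p \<alpha> y = p (\<alpha> - \<beta>) (\<tau> \<beta> y)"
    and c: "c \<in> code H"
  shows "codeword_error_prob H p M c = codeword_error_prob H p M 0"
proof -
  let ?N = "PiM (UNIV::'n set) (\<lambda>_. M)" and ?T = "\<lambda>y i. \<tau> (c i) (y i)"
  define g where "g y = indicator (error_region H p (space M) 0) y * (\<Prod>i\<in>UNIV. ennreal (p 0 (y i)))"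
    for y :: "'n \<Rightarrow> 'y"
  have tau_space: "\<forall>\<beta>. \<forall>y\<in>space M. \<tau> \<beta> y \<in> space M"
    using tau by (meson bij_betwE measure_preserving_bij_def)
  have "codeword_error_prob H p M c = (\<integral>\<^sup>+y. g (?T y) \<partial>?N)"
    unfolding codeword_error_prob_def
  proof (rule nn_integral_cong)
    fix y assume "y \<in> space ?N"
    hence y: "\<forall>i. y i \<in> space M" by (simp add: space_PiM_UNIV)
    have "p (c i) (y i) = p 0 (?T y i)" for i
      using symmetric y by (metis diff_self)
    with error_region_translate[OF p_pos tau_space symmetric c y] show
      "indicator (error_region H p (space M) c) y * (\<Prod>i\<in>UNIV. ennreal (p (c i) (y i))) = g (?T y)"
      by (simp add: g_def indicator_def)
  qed
  also have "\<dots> = (\<integral>\<^sup>+y. g y \<partial>?N)"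
    using measure_preserving_bij_PiM[OF assms(1) tau] by (rule nn_integral_measure_preserving_bij)
  also have "\<dots> = codeword_error_prob H p M 0"
    by (simp add: codeword_error_prob_def g_def)
  finally show ?thesis .
qed

theorem theorem1:
  fixes H :: "'m::finite \<Rightarrow> 'n::finite \<Rightarrow> 'r::{ring_1,finite}"
    and M :: "'y::euclidean_space measure"
    and p :: "'r \<Rightarrow> 'y \<Rightarrow> real"
    and \<tau> :: "'r \<Rightarrow> 'y \<Rightarrow> 'y"
    and c c' :: "'n \<Rightarrow> 'r"
  assumes alphabet: "(finite (space M) \<and> M = count_space (space M)) \<or>
                     (M = lborel \<and> (\<forall>\<beta> x y. dist (\<tau> \<beta> x) (\<tau> \<beta> y) = dist x y))"
    and p_pos: "\<forall>a. \<forall>y\<in>space M. 0 < p a y"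
    and p_meas: "\<forall>a. p a \<in> borel_measurable M"
    and p_prob: "\<forall>a. (\<integral>\<^sup>+ y. ennreal (p a y) \<partial>M) = 1"
    and tau_bij: "\<forall>\<beta>. bij_betw (\<tau> \<beta>) (space M) (space M)"
    and symmetric: "\<forall>\<beta> \<alpha>. \<forall>y\<in>space M. p \<alpha> y = p (\<alpha> - \<beta>) (\<tau> \<beta> y)"
    and c: "c \<in> code H" and c': "c' \<in> code H"
  shows "codeword_error_prob H p M c = codeword_error_prob H p M c'"
proof -
  have "sigma_finite_measure M \<and> (\<forall>\<beta>. measure_preserving_bij M (\<tau> \<beta>))"
    using alphabet
  proof
    assume "finite (space M) \<and> M = count_space (space M)"
    thus ?thesis
      using tau_bij measure_preserving_bij_count_space[of "\<tau> _" "space M"]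
      by (metis countable_finite sigma_finite_measure_count_space_countable)
  next
    assume "M = lborel \<and> (\<forall>\<beta> x y. dist (\<tau> \<beta> x) (\<tau> \<beta> y) = dist x y)"
    thus ?thesis
      using tau_bij by (auto intro!: measure_preserving_bij_lborel_isometry sigma_finite_lborel)
  qed
  thus ?thesis
    using codeword_error_prob_eq_zero_codeword[OF _ _ p_pos symmetric] c c' by metis
qed

end
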